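(* Let $T:\mathbb{Z}\to\mathbb{Z}$ be defined by $T(n)=n/2$ if $n$ is even and $T(n)=(3n+1)/2$ if $n$ is odd. For every nonzero integer $n$, the $T$-trajectory $(T^k(n))_{k\ge 0}$ has the following structure: there is $K\ge 0$ such that $T^k(n)\equiv 0\pmod 3$ for $0\le k<K$, and for $k\ge K$ every term $T^k(n)$ is congruent to $2$ or $8\pmod 9$ except for isolated terms (no two in succession) that are congruent to $1\pmod 3$ and isolated terms (no two in succession) that are congruent to $5\pmod 9$; that is, for all $k\ge K$, $T^k(n)\not\equiv 0\pmod 3$, it is not the case that $T^k(n)\equiv T^{k+1}(n)\equiv 1\pmod 3$, and it is not the case that $T^k(n)\equiv T^{k+1}(n)\equiv 5\pmod 9$.
   Context: $T^0(n)=n$, $T^{k+1}(n)=T(T^k(n))$. *)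

theory Defs
  imports Main
begin

definition T :: "int \<Rightarrow> int" where
  "T n = (if even n then n div 2 else (3 * n + 1) div 2)"

end

theory Submission
  imports Defs
begin

(* Multiples of 3 stay multiples of 3 only while T halves them, which cannot go on forever
   for n \<noteq> 0; an odd n is sent to 2 mod 3, and being nonzero mod 3 is preserved by T.
   From then on the exclusions are one-step facts: T never maps 1 mod 3 to 1 mod 3,
   nor 5 mod 9 to 5 mod 9. *)

lemma T_even: "even n \<Longrightarrow> T n = n div 2"
  unfolding T_def by simp

lemma T_odd_mod_3: "odd n \<Longrightarrow> T n mod 3 = 2"
  unfolding T_def by (auto elim!: oddE, presburger)

lemma T_mod_3_nonzero: "n mod 3 \<noteq> 0 \<Longrightarrow> T n mod 3 \<noteq> 0"
  unfolding T_def by (cases "even n") (auto elim!: evenE oddE, presburger+)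

lemma T_mod_3_one: "n mod 3 = 1 \<Longrightarrow> T n mod 3 \<noteq> 1"
  unfolding T_def by (cases "even n") (auto elim!: evenE oddE, presburger+)

lemma T_mod_9_five: "n mod 9 = 5 \<Longrightarrow> T n mod 9 \<noteq> 5"
  unfolding T_def by (cases "even n") (auto elim!: evenE oddE, presburger+)

lemma funpow_enters_invariant:
  assumes invariant: "\<And>y. P y \<Longrightarrow> P (f y)" and reached: "P ((f ^^ j) x)"
  shows "\<exists>K. (\<forall>k<K. \<not> P ((f ^^ k) x)) \<and> (\<forall>k\<ge>K. P ((f ^^ k) x))"
proof (intro exI conjI allI impI)
  define K where "K = (LEAST k. P ((f ^^ k) x))"
  show "\<not> P ((f ^^ k) x)" if "k < K" for k
    using that not_less_Least unfolding K_def by blast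
  show "P ((f ^^ k) x)" if "K \<le> k" for k
    using that
  proof (induction k rule: dec_induct)
    case base
    show ?case unfolding K_def using reached by (rule LeastI)
  next
    case (step m)
    then show ?case using invariant by simp
  qed
qed

lemma T_funpow_eventually_mod_3_nonzero:
  fixes n :: int
  assumes "n \<noteq> 0"
  shows "\<exists>k. (T ^^ k) n mod 3 \<noteq> 0"
  using assms
proof (induction "nat \<bar>n\<bar>" arbitrary: n rule: less_induct)
  case less
  consider "n mod 3 \<noteq> 0" | "odd n" | "even n" by blast
  then show ?case
  proof cases
    case 1
    then show ?thesis by (intro exI[of _ 0]) simp
  next
    case 2
    then show ?thesis using T_odd_mod_3 by (intro exI[of _ 1]) simp
  next
    case 3
    have "n div 2 \<noteq> 0" "nat \<bar>n div 2\<bar> < nat \<bar>n\<bar>"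
      using 3 less.prems by (auto elim!: evenE)
    then obtain k where "(T ^^ k) (n div 2) mod 3 \<noteq> 0"
      using less.hyps by blast
    then have "(T ^^ Suc k) n mod 3 \<noteq> 0"
      by (simp add: funpow_Suc_right T_even[OF 3] del: funpow.simps)
    then show ?thesis by blast
  qed
qed

theorem theorem4:
  fixes n :: int
  assumes "n \<noteq> 0"
  shows "\<exists>K::nat.
           (\<forall>k<K. (T ^^ k) n mod 3 = 0) \<and>
           (\<forall>k\<ge>K. (T ^^ k) n mod 3 \<noteq> 0
               \<and> \<not> ((T ^^ k) n mod 3 = 1 \<and> (T ^^ Suc k) n mod 3 = 1)
               \<and> \<not> ((T ^^ k) n mod 9 = 5 \<and> (T ^^ Suc k) n mod 9 = 5))"
proof -
  obtain j where "(T ^^ j) n mod 3 \<noteq> 0"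
    using T_funpow_eventually_mod_3_nonzero[OF assms] ..
  then obtain K where K: "\<forall>k<K. (T ^^ k) n mod 3 = 0" "\<forall>k\<ge>K. (T ^^ k) n mod 3 \<noteq> 0"
    using funpow_enters_invariant[where P = "\<lambda>m. m mod 3 \<noteq> 0" and f = T, OF T_mod_3_nonzero]
    by blast
  show ?thesis
    using K T_mod_3_one T_mod_9_five by (intro exI[of _ K]) auto
qed

end
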